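(* Let $d\geq 2$ and $n\geq d+2$. Let $\mathsf{B}^{d+1}_n$ be the simplicial complex whose facets are $\{i,i+1,\dots,i+d+1\}$ for $i=1,\dots,n-d-1$ (a stacked $(d+1)$-ball), and let $\mathsf{K}^d_n=\partial\mathsf{B}^{d+1}_n$, whose facet hypergraph is $$\mathcal{F}(\mathsf{K}^d_n)=\{g\setminus\{w\}: g\in\mathcal{F}(\mathsf{B}^{d+1}_n),\ w\in g\setminus\{\max g,\min g\}\}\cup\{\{1,\dots,d+1\},\{n-d,\dots,n\}\}.$$ Then: (i) if $n=(d+2)k$ for an integer $k\geq 1$, then $\tau(\mathcal{F}(\mathsf{B}^{d+1}_n))=\frac{n}{d+2}$; (ii) if $n=(d+3)k$ for an integer $k\geq 1$, then $\tau(\mathcal{F}(\mathsf{K}^d_n))=\frac{2n}{d+3}$.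
   Context: $\mathcal{F}(\cdot)$ denotes the facet hypergraph; $\tau(\mathcal{H})$ is the minimum size of a set of vertices meeting every hyperedge of $\mathcal{H}$. *)

theory Defs
  imports Complex_Main
begin

definition tau :: "'a set set \<Rightarrow> nat" where
  "tau H = (LEAST k. \<exists>T. T \<subseteq> \<Union>H \<and> finite T \<and> card T = k \<and> (\<forall>e\<in>H. T \<inter> e \<noteq> {}))"

definition facetsB :: "nat \<Rightarrow> nat \<Rightarrow> nat set set" where
  "facetsB d n = {{i..i+d+1} | i. 1 \<le> i \<and> i + d + 1 \<le> n}"

definition facetsK :: "nat \<Rightarrow> nat \<Rightarrow> nat set set" where
  "facetsK d n = {g - {w} | g w. g \<in> facetsB d n \<and> w \<in> g - {Max g, Min g}}
                 \<union> {{1..d+1}, {n-d..n}}"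

end

theory Submission
  imports Defs
begin

(* Lower bounds: for m = d+2 the facets {jm+1..jm+m}, j < k, of the ball are pairwise disjoint,
   so a transversal needs k vertices. For m = d+3 each block {jm+1..jm+m} of the sphere carries
   the two overlapping intervals {a..a+d+1} and {a+1..a+d+2} (a = jm+1); punctured at their
   interior points they cannot all be hit by a single vertex, so a transversal needs 2k vertices.
   Upper bounds: the multiples of m meet every m consecutive integers, and for the sphere the
   multiples together with their successors meet every punctured interval, because of the two
   adjacent vertices jm, jm+1 inside it at most one is removed. *)

definition transversal :: "'a set set \<Rightarrow> 'a set \<Rightarrow> bool" where
  "transversal H T \<longleftrightarrow> finite T \<and> (\<forall>e\<in>H. T \<inter> e \<noteq> {})"

lemma transversal_meets: "transversal H T \<Longrightarrow> e \<in> H \<Longrightarrow> T \<inter> e \<noteq> {}"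
  unfolding transversal_def by blast

lemma tau_eq_card:
  assumes T: "transversal H T"
    and minimal: "\<And>S. transversal H S \<Longrightarrow> card T \<le> card S"
  shows "tau H = card T"
  unfolding tau_def
proof (rule Least_equality)
  let ?T' = "T \<inter> \<Union>H"
  have T': "transversal H ?T'"
    using T unfolding transversal_def by blast
  have "card ?T' \<le> card T"
    using T by (simp add: transversal_def card_mono)
  then have "card ?T' = card T"
    using minimal[OF T'] by linarith
  then show "\<exists>U. U \<subseteq> \<Union>H \<and> finite U \<and> card U = card T \<and> (\<forall>e\<in>H. U \<inter> e \<noteq> {})"
    using T' unfolding transversal_def by blast
next
  fix k assume "\<exists>U. U \<subseteq> \<Union>H \<and> finite U \<and> card U = k \<and> (\<forall>e\<in>H. U \<inter> e \<noteq> {})"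
  then show "card T \<le> k"
    using minimal unfolding transversal_def by blast
qed

lemma card_ge_of_disjoint_family:
  fixes A :: "nat \<Rightarrow> 'a set"
  assumes "finite S"
    and disjoint: "\<And>i j. i < k \<Longrightarrow> j < k \<Longrightarrow> i \<noteq> j \<Longrightarrow> A i \<inter> A j = {}"
    and c: "\<And>j. j < k \<Longrightarrow> c \<le> card (S \<inter> A j)"
  shows "c * k \<le> card S"
proof -
  have "c * k = (\<Sum>j<k. c)" by simp
  also have "\<dots> \<le> (\<Sum>j<k. card (S \<inter> A j))"
    using c by (intro sum_mono) auto
  also have "\<dots> = card (\<Union>j<k. S \<inter> A j)"
    using assms(1) disjoint by (intro card_UN_disjoint[symmetric]) auto
  also have "\<dots> \<le> card S"
    using assms(1) by (intro card_mono) auto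
  finally show ?thesis .
qed

lemma disjoint_blocks:
  fixes m :: nat
  assumes "i \<noteq> j"
  shows "{i*m<..(i+1)*m} \<inter> {j*m<..(j+1)*m} = {}"
proof -
  have "{x*m<..(x+1)*m} \<inter> {y*m<..(y+1)*m} = {}" if "x < y" for x y
  proof -
    have "(x+1)*m \<le> y*m" using that by (intro mult_le_mono1) simp
    then show ?thesis by auto
  qed
  then show ?thesis
    using assms by (cases "i < j") (auto simp: Int_commute)
qed

lemma multiple_in_interval:
  fixes a m :: nat
  assumes "m > 0"
  obtains j where "a \<le> j * m" "j * m < a + m"
proof -
  have decomp: "a div m * m + a mod m = a" "a mod m < m"
    using assms by simp_all
  show ?thesis
  proof (cases "a mod m = 0")
    case True
    then show ?thesis using that[of "a div m"] decomp assms by simp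
  next
    case False
    have "(a div m + 1) * m = a div m * m + m" by simp
    then show ?thesis using that[of "a div m + 1"] decomp False by linarith
  qed
qed

lemma exists_other_point_in_overlapping_intervals:
  fixes a l :: nat
  assumes "l \<ge> 2"
    and first: "\<And>w. a < w \<Longrightarrow> w < a + l \<Longrightarrow> S \<inter> ({a..a+l} - {w}) \<noteq> {}"
    and second: "\<And>w. a + 1 < w \<Longrightarrow> w < a + l + 1 \<Longrightarrow> S \<inter> ({a+1..a+l+1} - {w}) \<noteq> {}"
    and p: "p \<in> S \<inter> {a..a+l+1}"
  shows "\<exists>s \<in> S \<inter> {a..a+l+1}. s \<noteq> p"
proof -
  consider "a < p \<and> p < a + l" | "p = a" | "p = a + l" | "p = a + l + 1"
    using p by fastforce
  then obtain X w where "S \<inter> (X - {w}) \<noteq> {}" "X \<subseteq> {a..a+l+1}" "p \<notin> X - {w}"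
  proof cases
    case 1
    then show ?thesis using first[of p] that[of "{a..a+l}" p] by auto
  next
    case 2
    then show ?thesis using second[of "a+2"] that[of "{a+1..a+l+1}" "a+2"] assms(1) by auto
  next
    case 3
    then show ?thesis using second[of p] that[of "{a+1..a+l+1}" p] assms(1) by auto
  next
    case 4
    then show ?thesis using first[of "a+1"] that[of "{a..a+l}" "a+1"] assms(1) by auto
  qed
  then show ?thesis by (auto simp del: atLeastAtMost_iff)
qed

lemma two_points_in_overlapping_intervals:
  fixes a l :: nat
  assumes "finite S" "l \<ge> 2"
    and first: "\<And>w. a < w \<Longrightarrow> w < a + l \<Longrightarrow> S \<inter> ({a..a+l} - {w}) \<noteq> {}"
    and second: "\<And>w. a + 1 < w \<Longrightarrow> w < a + l + 1 \<Longrightarrow> S \<inter> ({a+1..a+l+1} - {w}) \<noteq> {}"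
  shows "2 \<le> card (S \<inter> {a..a+l+1})"
proof -
  have "S \<inter> ({a..a+l} - {a+1}) \<noteq> {}"
    using first assms(2) by simp
  then obtain p where "p \<in> S" "p \<in> {a..a+l}"
    by blast
  then have p: "p \<in> S \<inter> {a..a+l+1}"
    by simp
  obtain s where s: "s \<in> S \<inter> {a..a+l+1}" "s \<noteq> p"
    using exists_other_point_in_overlapping_intervals[OF assms(2) first second p] by blast
  have "card {p, s} \<le> card (S \<inter> {a..a+l+1})"
    using p s assms(1) by (intro card_mono) auto
  then show ?thesis
    using s(2) by simp
qed

lemma punctured_interval_meets_multiples:
  fixes i l w :: nat
  assumes "1 \<le> i" "i < w" "w < i + l"
  shows "\<exists>j. (j \<ge> 1 \<and> j * (l+2) \<in> {i..i+l} - {w}) \<or> j * (l+2) + 1 \<in> {i..i+l} - {w}"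
proof -
  obtain j where j: "i - 1 \<le> j * (l+2)" "j * (l+2) < i - 1 + (l+2)"
    using multiple_in_interval[of "l+2" "i-1"] by auto
  show ?thesis
  proof (cases "j * (l+2) = i - 1")
    case True
    then have "j * (l+2) + 1 \<in> {i..i+l} - {w}" using assms by auto
    then show ?thesis by blast
  next
    case False
    then have upper: "i \<le> j * (l+2)" "j * (l+2) \<le> i + l" using j assms(1) by auto
    then have "j \<ge> 1" using assms(1) by (cases j) auto
    show ?thesis
    proof (cases "w = j * (l+2)")
      case True
      then have "j * (l+2) + 1 \<in> {i..i+l} - {w}" using upper assms(3) by auto
      then show ?thesis by blast
    next
      case False
      then have "j * (l+2) \<in> {i..i+l} - {w}" using upper by auto
      with \<open>j \<ge> 1\<close> show ?thesis by blast
    qed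
  qed
qed

lemma Max_atLeastAtMost_nat: "a \<le> b \<Longrightarrow> Max {a..b} = (b::nat)"
  by (rule Max_eqI) auto

lemma Min_atLeastAtMost_nat: "a \<le> b \<Longrightarrow> Min {a..b} = (a::nat)"
  by (rule Min_eqI) auto

lemma mem_facetsB_iff:
  "e \<in> facetsB d n \<longleftrightarrow> (\<exists>i. 1 \<le> i \<and> i + d + 1 \<le> n \<and> e = {i..i+d+1})"
  unfolding facetsB_def by blast

lemma mem_facetsK_iff:
  "e \<in> facetsK d n \<longleftrightarrow>
     (\<exists>i w. 1 \<le> i \<and> i + d + 1 \<le> n \<and> i < w \<and> w < i + d + 1 \<and> e = {i..i+d+1} - {w})
     \<or> e = {1..d+1} \<or> e = {n-d..n}"
proof -
  have "(\<exists>g w. e = g - {w} \<and> g \<in> facetsB d n \<and> w \<in> g - {Max g, Min g}) \<longleftrightarrow>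
        (\<exists>i w. 1 \<le> i \<and> i + d + 1 \<le> n \<and> i < w \<and> w < i + d + 1 \<and> e = {i..i+d+1} - {w})"
  proof
    assume "\<exists>g w. e = g - {w} \<and> g \<in> facetsB d n \<and> w \<in> g - {Max g, Min g}"
    then obtain i w where i: "1 \<le> i" "i + d + 1 \<le> n" "e = {i..i+d+1} - {w}"
        and w: "w \<in> {i..i+d+1} - {Max {i..i+d+1}, Min {i..i+d+1}}"
      unfolding mem_facetsB_iff by blast
    from w have "i < w" "w < i + d + 1"
      by (auto simp: Max_atLeastAtMost_nat Min_atLeastAtMost_nat)
    with i show "\<exists>i w. 1 \<le> i \<and> i + d + 1 \<le> n \<and> i < w \<and> w < i + d + 1 \<and> e = {i..i+d+1} - {w}"
      by blast
  next
    assume "\<exists>i w. 1 \<le> i \<and> i + d + 1 \<le> n \<and> i < w \<and> w < i + d + 1 \<and> e = {i..i+d+1} - {w}"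
    then obtain i w where "1 \<le> i" "i + d + 1 \<le> n" "i < w" "w < i + d + 1" "e = {i..i+d+1} - {w}"
      by blast
    then show "\<exists>g w. e = g - {w} \<and> g \<in> facetsB d n \<and> w \<in> g - {Max g, Min g}"
      unfolding mem_facetsB_iff
      by (intro exI[of _ "{i..i+d+1}"] exI[of _ w]) (auto simp: Max_atLeastAtMost_nat Min_atLeastAtMost_nat)
  qed
  then show ?thesis
    unfolding facetsK_def by blast
qed

lemma punctured_facet_mem_facetsK:
  "1 \<le> i \<Longrightarrow> i + d + 1 \<le> n \<Longrightarrow> i < w \<Longrightarrow> w < i + d + 1 \<Longrightarrow> {i..i+d+1} - {w} \<in> facetsK d n"
  unfolding mem_facetsK_iff by blast

lemma tau_facetsB:
  assumes "n = k * (d + 2)"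
  shows "tau (facetsB d n) = k"
proof -
  define m where "m = d + 2"
  define T where "T = (\<lambda>j. j * m) ` {1..k}"
  have "inj_on (\<lambda>j. j * m) {1..k}"
    by (simp add: inj_on_def m_def del: mult_Suc_right)
  then have card_T: "card T = k"
    by (simp add: T_def card_image)
  have "transversal (facetsB d n) T"
    unfolding transversal_def
  proof (intro conjI ballI)
    fix e assume "e \<in> facetsB d n"
    then obtain i where i: "1 \<le> i" "i + d + 1 \<le> n" "e = {i..i+d+1}"
      by (auto simp: mem_facetsB_iff)
    obtain j where j: "i \<le> j * m" "j * m < i + m"
      using multiple_in_interval[of m i] by (auto simp: m_def)
    have "1 \<le> j" using i(1) j(1) by (cases j) auto
    moreover have "j * m \<le> k * m"
      using i(2) j(2) assms(1) by (simp add: m_def)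
    then have "j \<le> k"
      using mult_le_cancel2[of j m k] by (simp add: m_def)
    ultimately have "j * m \<in> T"
      unfolding T_def by (intro imageI) simp
    moreover have "j * m \<in> e"
      using i(3) j by (simp add: m_def)
    ultimately show "T \<inter> e \<noteq> {}"
      by blast
  qed (simp add: T_def)
  moreover have "card T \<le> card S" if S: "transversal (facetsB d n) S" for S
  proof -
    have "1 * k \<le> card S"
    proof (rule card_ge_of_disjoint_family[where A = "\<lambda>j. {j*m<..(j+1)*m}"])
      show "finite S" using S by (simp add: transversal_def)
      fix j assume "j < k"
      then have "(j + 1) * m \<le> n"
        unfolding assms(1) m_def by (intro mult_le_mono1) simp
      then have "{j*m<..(j+1)*m} \<in> facetsB d n"
        unfolding mem_facetsB_iff m_def by (intro exI[of _ "j*(d+2)+1"]) auto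
      then have "S \<inter> {j*m<..(j+1)*m} \<noteq> {}"
        by (rule transversal_meets[OF S])
      then show "1 \<le> card (S \<inter> {j*m<..(j+1)*m})"
        using S by (simp add: transversal_def card_gt_0_iff Suc_le_eq)
    qed (rule disjoint_blocks)
    then show ?thesis using card_T by simp
  qed
  ultimately show ?thesis
    using tau_eq_card card_T by metis
qed

lemma tau_facetsK:
  assumes "d \<ge> 1" "k \<ge> 1" "n = k * (d + 3)"
  shows "tau (facetsK d n) = 2 * k"
proof -
  define m where "m = d + 3"
  define T where "T = (\<lambda>j. j * m) ` {1..k} \<union> (\<lambda>j. j * m + 1) ` {..<k}"
  have multiple_in_T: "j * m \<in> T" if "1 \<le> j" "j * m \<le> n" for j
    using that assms(3) unfolding T_def m_def by auto
  have successor_in_T: "j * m + 1 \<in> T" if "j * m < n" for j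
    using that assms(3) unfolding T_def m_def by auto
  have card_T: "card T = 2 * k"
  proof -
    have "j * m \<noteq> i * m + 1" for i j
    proof
      assume "j * m = i * m + 1"
      then have "m dvd i * m + 1" by (metis dvd_triv_right)
      then have "m dvd 1" using dvd_add_right_iff[of m "i * m" 1] by simp
      then show False by (simp add: m_def)
    qed
    then have "(\<lambda>j. j * m) ` {1..k} \<inter> (\<lambda>j. j * m + 1) ` {..<k} = {}"
      by auto
    then show ?thesis
      unfolding T_def by (subst card_Un_disjoint) (auto simp: card_image inj_on_def m_def)
  qed
  have "transversal (facetsK d n) T"
    unfolding transversal_def
  proof (intro conjI ballI)
    fix e assume "e \<in> facetsK d n"
    then consider (punctured) i w where "1 \<le> i" "i + d + 1 \<le> n" "i < w" "w < i + d + 1"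
        "e = {i..i+d+1} - {w}"
      | (first) "e = {1..d+1}" | (last) "e = {n-d..n}"
      unfolding mem_facetsK_iff by blast
    then show "T \<inter> e \<noteq> {}"
    proof cases
      case punctured
      have "e = {i..i + (d+1)} - {w}" "w < i + (d+1)" "m = (d+1) + 2"
        using punctured(4,5) by (simp_all add: m_def)
      then obtain j where j: "(j \<ge> 1 \<and> j * m \<in> e) \<or> j * m + 1 \<in> e"
        using punctured_interval_meets_multiples[of i w "d+1"] punctured(1,3) by metis
      have "e \<subseteq> {..n}"
        using punctured(2,5) by auto
      with j show ?thesis
        using multiple_in_T[of j] successor_in_T[of j] by fastforce
    next
      case first
      then show ?thesis using successor_in_T[of 0] assms by auto
    next
      case last
      have "k * m \<in> T" "k * m \<in> e"
        using multiple_in_T[of k] last assms by (simp_all add: m_def)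
      then show ?thesis by blast
    qed
  qed (simp add: T_def)
  moreover have "card T \<le> card S" if S: "transversal (facetsK d n) S" for S
  proof -
    have "2 * k \<le> card S"
    proof (rule card_ge_of_disjoint_family[where A = "\<lambda>j. {j*m<..(j+1)*m}"])
      show "finite S" using S by (simp add: transversal_def)
      fix j assume "j < k"
      define a where "a = j * m + 1"
      have "(j + 1) * m \<le> n"
        using \<open>j < k\<close> unfolding assms(3) m_def by (intro mult_le_mono1) simp
      then have a: "1 \<le> a" "a + d + 2 \<le> n"
        by (auto simp: a_def m_def)
      have block: "{j*m<..(j+1)*m} = {a..a + (d+1) + 1}"
        by (auto simp: a_def m_def)
      have "2 \<le> card (S \<inter> {a..a + (d+1) + 1})"
      proof (rule two_points_in_overlapping_intervals)
        show "finite S" using S by (simp add: transversal_def)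
        show "2 \<le> d + 1" using assms(1) by simp
        fix w
        show "S \<inter> ({a..a + (d+1)} - {w}) \<noteq> {}" if "a < w" "w < a + (d+1)"
          using transversal_meets[OF S punctured_facet_mem_facetsK[of a d n w]] that a by simp
        show "S \<inter> ({a+1..a + (d+1) + 1} - {w}) \<noteq> {}" if "a + 1 < w" "w < a + (d+1) + 1"
          using transversal_meets[OF S punctured_facet_mem_facetsK[of "a+1" d n w]] that a by simp
      qed
      then show "2 \<le> card (S \<inter> {j*m<..(j+1)*m})"
        by (simp only: block)
    qed (rule disjoint_blocks)
    then show ?thesis using card_T by simp
  qed
  ultimately show ?thesis
    using tau_eq_card card_T by metis
qed

theorem mainTheorem10:
  fixes d n :: nat
  assumes "d \<ge> 2" and "n \<ge> d + 2"
  shows "(\<forall>k::nat. k \<ge> 1 \<and> n = (d+2)*k \<longrightarrow> real (tau (facetsB d n)) = real n / real (d+2))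
       \<and> (\<forall>k::nat. k \<ge> 1 \<and> n = (d+3)*k \<longrightarrow> real (tau (facetsK d n)) = 2 * real n / real (d+3))"
proof (intro conjI allI impI)
  fix k :: nat assume k: "k \<ge> 1 \<and> n = (d+2)*k"
  then have "tau (facetsB d n) = k"
    using tau_facetsB[of n k d] by (simp add: mult.commute)
  moreover have "real n = real (d+2) * real k"
    using k by (simp only: of_nat_mult)
  ultimately show "real (tau (facetsB d n)) = real n / real (d+2)"
    by simp
next
  fix k :: nat assume k: "k \<ge> 1 \<and> n = (d+3)*k"
  then have "tau (facetsK d n) = 2 * k"
    using assms(1) tau_facetsK[of d k n] by (simp add: mult.commute)
  moreover have "real n = real (d+3) * real k"
    using k by (simp only: of_nat_mult)
  ultimately show "real (tau (facetsK d n)) = 2 * real n / real (d+3)"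
    by simp
qed

end
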